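(* Let $p\geq 3$ be a prime, $u\in\{1,\ldots,p-1\}$ and $s\geq 2$ an integer. For an integer $n\geq p^{s+1}$ with base-$p$ expansion $n=\sum_{i=0}^{v}\varepsilon_i p^{i}$ ($\varepsilon_i\in\{0,\ldots,p-1\}$), let $t(n)>s$ be the least index $t>s$ with $\varepsilon_t\neq 0$. Then among those $n\geq p^{s+1}$ with $\nu_{p}\big(A_{p,(p-1)(up^s-1)}(n)\big)\in\{1,2\}$, the value $\nu_{p}\big(A_{p,(p-1)(up^s-1)}(n)\big)$ depends only on the digit $\varepsilon_s$ and the digit $\varepsilon_{t(n)}$; that is, if $n,n'\geq p^{s+1}$ both have valuation in $\{1,2\}$, the same digit in position $s$, and the same first nonzero digit in a position greater than $s$, then $\nu_{p}\big(A_{p,(p-1)(up^s-1)}(n)\big)=\nu_{p}\big(A_{p,(p-1)(up^s-1)}(n')\big)$.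
   Context: For an integer $m\geq 2$ and a positive integer $k$, the integers $A_{m,k}(n)$, $n\in\mathbb{N}=\{0,1,2,\ldots\}$, are defined by the formal power series identity $\prod_{i=0}^{\infty}\big(1-x^{m^{i}}\big)^{-k}=\sum_{n=0}^{\infty}A_{m,k}(n)x^{n}$. For a prime $p$, $\nu_p(n)$ denotes the $p$-adic valuation of the integer $n$, with $\nu_p(0)=+\infty$. *)

theory Defs
  imports "HOL-Computational_Algebra.Computational_Algebra"
begin

text \<open>The formal power series (1 - x^d)^(-1) = sum_j x^(d j) over the integers (d >= 1).\<close>
definition geom_fps :: "nat \<Rightarrow> int fps" where
  "geom_fps d = Abs_fps (\<lambda>j. if d dvd j then 1 else 0)"


text \<open>A_{m,k}(n): coefficient of x^n in prod_{i>=0} (1 - x^(m^i))^(-k).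
  Factors with m^i > n are congruent to 1 modulo x^(n+1), so the product over i <= n
  has the same n-th coefficient as the infinite product (m >= 2 gives m^n > n).\<close>
definition A :: "nat \<Rightarrow> nat \<Rightarrow> nat \<Rightarrow> int" where
  "A m k n = fps_nth (\<Prod>i\<le>n. geom_fps (m ^ i) ^ k) n"

definition digit :: "nat \<Rightarrow> nat \<Rightarrow> nat \<Rightarrow> nat" where
  "digit p n i = n div p ^ i mod p"

definition tidx :: "nat \<Rightarrow> nat \<Rightarrow> nat \<Rightarrow> nat" where
  "tidx p s n = (LEAST t. s < t \<and> digit p n t \<noteq> 0)"

end

theory Submission
  imports Defs
begin

text \<open>
  Write \<open>k = (p - 1) (u p\<^sup>s - 1)\<close> and let \<open>Q\<close> be the product of the \<open>1 - x^(p^i)\<close>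
  over \<open>i \<le> n\<close>, so that \<open>A(n)\<close> is the coefficient of \<open>x^n\<close> in \<open>Q^(-k)\<close>. The coefficients
  of \<open>P = Q^(p - 1)\<close> are products, over the base-\<open>p\<close> digits of the index, of the numbers
  \<open>(-1)^e C(p - 1, e) \<equiv> 1 (mod p)\<close>. Hence \<open>P (1 - x) \<equiv> 1 (mod p)\<close> in degrees \<open>\<le> n\<close>, so
  its \<open>u p\<^sup>s\<close>-th power is \<open>1\<close> modulo \<open>p\<^sup>2\<close>, and
  \<open>Q^(-k) \<equiv> P (1 - x)^(u p^s) \<equiv> P (1 - x^(p^(s-1)))^(u p) (mod p\<^sup>2)\<close>,
  the last step by Frobenius and lifting. Reading off the coefficient of \<open>x^n\<close> expresses
  \<open>A(n)\<close> modulo \<open>p\<^sup>2\<close> as a unit times a short alternating sum \<open>S\<^sub>r\<close> pairing the binomial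
  coefficients of \<open>(1 - x)^(u p + p - 1)\<close> with digit products, where \<open>r\<close> is the digit of \<open>n\<close>
  in position \<open>s - 1\<close>. Since \<open>p\<close> divides \<open>u p + p\<close>, the binomial recurrence gives
  \<open>S\<^sub>r \<equiv> S\<^sub>0 (mod p\<^sup>2)\<close> as soon as \<open>p\<close> divides \<open>A(n)\<close>, and \<open>S\<^sub>0\<close> is a unit times an
  expression in \<open>u\<close>, the digit \<open>\<epsilon>\<^sub>s\<close> and the first nonzero digit above position \<open>s\<close> only.
\<close>

section \<open>Binomial congruences\<close>

lemma dvd_power_diff:
  fixes x y :: "'a::comm_ring_1"
  assumes "a dvd x - y"
  shows "a dvd x ^ k - y ^ k"
proof (cases k)
  case (Suc m)
  have "x ^ Suc m - y ^ Suc m = (x - y) * (\<Sum>i<Suc m. x ^ i * y ^ (m - i))"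
    by (rule diff_power_eq_sum)
  then show ?thesis
    using assms Suc by simp
qed simp

lemma dvd_diff_trans:
  fixes x y z :: "'a::comm_ring_1"
  assumes "a dvd x - y" and "a dvd y - z"
  shows "a dvd x - z"
  using dvd_add[OF assms] by simp

lemma dvd_diff_imp_dvd_iff:
  fixes x y :: "'a::comm_ring_1"
  assumes "a dvd x - y"
  shows "a dvd x \<longleftrightarrow> a dvd y"
  using dvd_add_right_iff[OF assms, of y] by simp

lemma prime_dvd_mult_cancel:
  fixes c x :: int
  assumes "prime p" and "\<not> int p dvd c"
  shows "int p ^ k dvd c * x \<longleftrightarrow> int p ^ k dvd x"
proof -
  have "coprime (int p) c"
    using assms by (intro prime_imp_coprime) simp_all
  then show ?thesis
    by (simp add: coprime_dvd_mult_right_iff)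
qed

lemma prime_power_add_expansion:
  fixes x y :: "'a::comm_ring_1"
  assumes p: "prime p"
  obtains c where "(x + y) ^ p = x ^ p + y ^ p + of_nat p * x * y * c"
proof
  define c where "c = (\<Sum>k\<in>{1..<p}. of_nat ((p choose k) div p) * y ^ (k - 1) * x ^ (p - k - 1))"
  have p0: "0 < p" using p prime_gt_0_nat by blast
  have middle: "of_nat (p choose k) * y ^ k * x ^ (p - k)
      = of_nat p * x * y * (of_nat ((p choose k) div p) * y ^ (k - 1) * x ^ (p - k - 1))"
    if k: "k \<in> {1..<p}" for k
  proof -
    have "p dvd (p choose k)" using k p by (intro dvd_choose_prime) auto
    then have "of_nat (p choose k) = (of_nat p * of_nat ((p choose k) div p) :: 'a)"
      by (metis dvd_mult_div_cancel of_nat_mult)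
    moreover have "k = Suc (k - 1)" "p - k = Suc (p - k - 1)"
      using k by auto
    then have "y ^ k = y * y ^ (k - 1)" "x ^ (p - k) = x * x ^ (p - k - 1)"
      by (metis power_Suc)+
    ultimately show ?thesis by (simp add: ac_simps)
  qed
  have "(x + y) ^ p = (\<Sum>k\<le>p. of_nat (p choose k) * y ^ k * x ^ (p - k))"
    by (subst add.commute) (rule binomial_ring)
  also have "{..p} = insert 0 (insert p {1..<p})" using p0 by auto
  also have "(\<Sum>k\<in>insert 0 (insert p {1..<p}). of_nat (p choose k) * y ^ k * x ^ (p - k))
      = x ^ p + y ^ p + (\<Sum>k\<in>{1..<p}. of_nat (p choose k) * y ^ k * x ^ (p - k))"
    using p0 by simp
  also have "(\<Sum>k\<in>{1..<p}. of_nat (p choose k) * y ^ k * x ^ (p - k)) = of_nat p * x * y * c"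
    unfolding c_def sum_distrib_left by (rule sum.cong) (simp_all add: middle)
  finally show "(x + y) ^ p = x ^ p + y ^ p + of_nat p * x * y * c" .
qed

lemma prime_dvd_one_minus_power:
  fixes x :: "'a::comm_ring_1"
  assumes "prime p" and "odd p"
  shows "of_nat p dvd (1 - x) ^ p - (1 - x ^ p)"
proof -
  obtain c where "(1 + - x) ^ p = 1 ^ p + (- x) ^ p + of_nat p * 1 * (- x) * c"
    using prime_power_add_expansion[OF assms(1)] .
  moreover have "(- x) ^ p = - (x ^ p)" using assms(2) by simp
  ultimately have "(1 - x) ^ p - (1 - x ^ p) = of_nat p * (- x * c)" by simp
  then show ?thesis by simp
qed

lemma prime_power_dvd_power_prime_diff:
  fixes x y :: "'a::comm_ring_1"
  assumes p: "prime p" and "of_nat p dvd x - y"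
  shows "of_nat p ^ 2 dvd x ^ p - y ^ p"
proof -
  obtain z where z: "x - y = of_nat p * z" using assms(2) by blast
  obtain c where c: "(y + of_nat p * z) ^ p = y ^ p + (of_nat p * z) ^ p + of_nat p * y * (of_nat p * z) * c"
    using prime_power_add_expansion[OF p] .
  have "2 \<le> p" using p prime_ge_2_nat by blast
  then have "of_nat p ^ 2 dvd (of_nat p * z :: 'a) ^ p"
    by (simp add: power_mult_distrib le_imp_power_dvd)
  moreover have "x = y + of_nat p * z" using z by (simp add: algebra_simps)
  ultimately show ?thesis
    using c by (simp add: power2_eq_square mult_ac)
qed

lemma prime_square_dvd_one_minus_power_prime_power:
  fixes x :: "'a::comm_ring_1"
  assumes p: "prime p" "odd p" and s: "1 \<le> s"
  shows "of_nat p ^ 2 dvd (1 - x) ^ (p ^ s) - (1 - x ^ (p ^ (s - 1))) ^ p"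
  using s
proof (induction s arbitrary: x rule: nat_induct_at_least)
  case (Suc s)
  have ps: "p ^ s = p * p ^ (s - 1)"
    using Suc.hyps by (cases s) simp_all
  have "of_nat p ^ 2 dvd ((1 - x) ^ p) ^ p - (1 - x ^ p) ^ p"
    using prime_power_dvd_power_prime_diff[OF p(1) prime_dvd_one_minus_power[OF p]] .
  then have "of_nat p ^ 2 dvd (((1 - x) ^ p) ^ p) ^ (p ^ (s - 1)) - ((1 - x ^ p) ^ p) ^ (p ^ (s - 1))"
    by (rule dvd_power_diff)
  then have "of_nat p ^ 2 dvd (1 - x) ^ (p ^ Suc s) - (1 - x ^ p) ^ (p ^ s)"
    unfolding power_Suc ps by (simp only: power_mult mult.assoc)
  moreover have "of_nat p ^ 2 dvd (1 - x ^ p) ^ (p ^ s) - (1 - x ^ (p ^ s)) ^ p"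
    using Suc.IH[of "x ^ p"] by (simp only: ps flip: power_mult)
  ultimately show ?case
    unfolding diff_Suc_1 by (rule dvd_diff_trans)
qed simp

section \<open>Congruence of power series up to a given degree\<close>

definition fps_cong :: "int \<Rightarrow> nat \<Rightarrow> int fps \<Rightarrow> int fps \<Rightarrow> bool" where
  "fps_cong M n f g \<longleftrightarrow> (\<forall>i\<le>n. M dvd f $ i - g $ i)"

lemma fps_congI: "(\<And>i. i \<le> n \<Longrightarrow> M dvd f $ i - g $ i) \<Longrightarrow> fps_cong M n f g"
  by (simp add: fps_cong_def)

lemma fps_cong_refl: "fps_cong M n f f"
  by (simp add: fps_cong_def)

lemma fps_cong_sym: "fps_cong M n f g \<Longrightarrow> fps_cong M n g f"
  unfolding fps_cong_def by (metis dvd_minus_iff minus_diff_eq)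

lemma fps_cong_trans: "fps_cong M n f g \<Longrightarrow> fps_cong M n g h \<Longrightarrow> fps_cong M n f h"
  unfolding fps_cong_def by (blast intro: dvd_diff_trans)

lemma fps_cong_mult_right:
  assumes "fps_cong M n f g"
  shows "fps_cong M n (f * h) (g * h)"
proof (rule fps_congI)
  fix i assume i: "i \<le> n"
  have "(f * h) $ i - (g * h) $ i = (\<Sum>j=0..i. (f $ j - g $ j) * h $ (i - j))"
    by (simp add: fps_mult_nth sum_subtractf left_diff_distrib)
  also have "M dvd \<dots>"
    using assms i unfolding fps_cong_def by (intro dvd_sum) auto
  finally show "M dvd (f * h) $ i - (g * h) $ i" .
qed

lemma fps_cong_mult:
  assumes "fps_cong M n f g" and "fps_cong M n f' g'"
  shows "fps_cong M n (f * f') (g * g')"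
proof -
  have "fps_cong M n (f' * f) (g' * f)" "fps_cong M n (f * g') (g * g')"
    using assms by (simp_all add: fps_cong_mult_right)
  then show ?thesis
    by (simp add: fps_cong_trans mult.commute)
qed

lemma fps_cong_power: "fps_cong M n f g \<Longrightarrow> fps_cong M n (f ^ k) (g ^ k)"
  by (induction k) (simp_all add: fps_cong_refl fps_cong_mult)

lemma fps_cong_if_const_dvd:
  assumes "fps_const M dvd f - g"
  shows "fps_cong M n f g"
proof (rule fps_congI)
  fix i
  obtain h where "f - g = fps_const M * h"
    using assms by (rule dvdE)
  then have "f $ i - g $ i = M * h $ i"
    by (metis fps_mult_left_const_nth fps_sub_nth)
  then show "M dvd f $ i - g $ i" by simp
qed

lemma fps_cong_power_prime:
  assumes p: "prime p" and fg: "fps_cong (int p) n f g"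
  shows "fps_cong (int p ^ 2) n (f ^ p) (g ^ p)"
proof -
  \<comment> \<open>Lift \<open>f - g\<close> to a multiple of \<open>p\<close> in all degrees, keeping the coefficients up to \<open>n\<close>.\<close>
  define g' where "g' = g + of_nat p * Abs_fps (\<lambda>i. (f $ i - g $ i) div int p)"
  have "fps_cong (int p ^ 2) n f g'"
    using fg by (intro fps_congI) (simp add: g'_def fps_cong_def flip: fps_of_nat)
  then have "fps_cong (int p ^ 2) n (f ^ p) (g' ^ p)"
    by (rule fps_cong_power)
  moreover have "of_nat p ^ 2 dvd g' ^ p - g ^ p"
    by (rule prime_power_dvd_power_prime_diff[OF p]) (simp add: g'_def)
  then have "fps_cong (int p ^ 2) n (g' ^ p) (g ^ p)"
    by (intro fps_cong_if_const_dvd) (simp flip: fps_of_nat)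
  ultimately show ?thesis
    by (rule fps_cong_trans)
qed

section \<open>Alternating binomial coefficients and digit products\<close>

definition alt_binom :: "nat \<Rightarrow> nat \<Rightarrow> int" where
  "alt_binom K i = (-1) ^ i * int (K choose i)"

lemma alt_binom_0 [simp]: "alt_binom K 0 = 1"
  by (simp add: alt_binom_def)

lemma alt_binom_Suc: "int (Suc i) * alt_binom K (Suc i) = (int i - int K) * alt_binom K i"
proof (cases "i \<le> K")
  case True
  have "Suc i * (K choose Suc i) = (K - i) * (K choose i)"
    by (metis binomial_absorption binomial_absorb_comp)
  then have binom: "int (Suc i) * int (K choose Suc i) = (int K - int i) * int (K choose i)"
    using True by (metis of_nat_diff of_nat_mult)
  have "int (Suc i) * alt_binom K (Suc i) = - ((-1) ^ i * (int (Suc i) * int (K choose Suc i)))"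
    by (simp add: alt_binom_def)
  also have "\<dots> = (int i - int K) * alt_binom K i"
    unfolding binom by (simp add: alt_binom_def algebra_simps)
  finally show ?thesis .
qed (simp add: alt_binom_def binomial_eq_0)

lemma alt_binom_Suc_diff:
  "int (Suc i) * (alt_binom K (Suc i) - alt_binom K i) = - int (Suc K) * alt_binom K i"
  using alt_binom_Suc[of i K] by (simp add: algebra_simps)

lemma alt_binom_pred:
  assumes "0 < e" and "e < p"
  shows "int (p - e) * alt_binom (p - 1) (e - 1) = - int e * alt_binom (p - 1) e"
  using alt_binom_Suc[of "e - 1" "p - 1"] assms by (simp add: of_nat_diff algebra_simps)

lemma one_minus_X_power_power_nth:
  assumes "D > 0"
  shows "((1 - fps_X ^ D) ^ K :: int fps) $ i = (if D dvd i then alt_binom K (i div D) else 0)"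
proof -
  have "(1 - fps_X ^ D :: int fps) ^ K = (\<Sum>k\<le>K. of_nat (K choose k) * (- (fps_X ^ D)) ^ k * 1 ^ (K - k))"
    by (subst binomial_ring[symmetric]) simp
  also have "\<dots> = (\<Sum>k\<le>K. fps_const (alt_binom K k) * fps_X ^ (D * k))"
  proof (rule sum.cong)
    fix k
    have "(- 1 :: int fps) ^ k = fps_const ((-1) ^ k)"
      by (induction k) (simp_all flip: fps_const_mult)
    then have "(- (fps_X ^ D) :: int fps) ^ k = fps_const ((-1) ^ k) * fps_X ^ (D * k)"
      by (simp only: power_minus[of "fps_X ^ D"] power_mult)
    then show "of_nat (K choose k) * (- (fps_X ^ D)) ^ k * 1 ^ (K - k) = fps_const (alt_binom K k) * fps_X ^ (D * k)"
      by (simp add: alt_binom_def fps_of_nat ac_simps flip: fps_const_mult)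
  qed simp
  finally have "((1 - fps_X ^ D) ^ K :: int fps) $ i = (\<Sum>k\<le>K. if i = D * k then alt_binom K k else 0)"
    by (simp add: fps_sum_nth) (auto intro: sum.cong)
  also have "\<dots> = (if D dvd i then alt_binom K (i div D) else 0)"
  proof (cases "D dvd i")
    case True
    then obtain q where "i = D * q" ..
    with assms show ?thesis
      by (simp add: sum.delta sum.delta' alt_binom_def binomial_eq_0)
  qed (auto intro!: sum.neutral)
  finally show ?thesis .
qed

lemma fps_mult_nth_restrict:
  assumes "S \<subseteq> {..n}" and "\<And>i. i \<le> n \<Longrightarrow> i \<notin> S \<Longrightarrow> f $ i * g $ (n - i) = 0"
  shows "(f * g) $ n = (\<Sum>i\<in>S. f $ i * g $ (n - i))"
  unfolding fps_mult_nth atLeast0AtMost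
  by (intro sum.mono_neutral_right) (use assms in auto)

lemma one_minus_X_power_power_mult_nth:
  assumes D: "D > 0" and n: "D * K \<le> n"
  shows "((1 - fps_X ^ D) ^ K * F) $ n = (\<Sum>m\<le>K. alt_binom K m * F $ (n - D * m))"
proof -
  have "((1 - fps_X ^ D) ^ K * F) $ n = (\<Sum>i\<in>(\<lambda>m. D * m) ` {..K}. ((1 - fps_X ^ D) ^ K) $ i * F $ (n - i))"
  proof (rule fps_mult_nth_restrict)
    show "(\<lambda>m. D * m) ` {..K} \<subseteq> {..n}"
      using n by (auto intro: order.trans[OF mult_le_mono2])
  next
    fix i assume "i \<le> n" "i \<notin> (\<lambda>m. D * m) ` {..K}"
    then show "((1 - fps_X ^ D) ^ K) $ i * F $ (n - i) = 0"
      using D by (auto simp: one_minus_X_power_power_nth alt_binom_def binomial_eq_0 elim!: dvdE)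
  qed
  also have "\<dots> = (\<Sum>m\<le>K. alt_binom K m * F $ (n - D * m))"
    using D by (subst sum.reindex) (auto simp: inj_on_def one_minus_X_power_power_nth)
  finally show ?thesis .
qed

lemma geom_fps_mult_one_minus_X_power:
  assumes d: "d > 0"
  shows "geom_fps d * (1 - fps_X ^ d) = 1"
proof (rule fps_ext)
  fix i
  have "(geom_fps d * (1 - fps_X ^ d)) $ i = geom_fps d $ i - (fps_X ^ d * geom_fps d) $ i"
    by (simp add: right_diff_distrib mult.commute)
  also have "\<dots> = (if d dvd i then 1 else 0) - (if i < d then 0 else if d dvd (i - d) then 1 else 0)"
    unfolding fps_X_power_mult_nth by (simp add: geom_fps_def)
  also have "\<dots> = (1 :: int fps) $ i"
    using d by (cases "i < d") (auto simp: dvd_minus_self dest: dvd_imp_le)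
  finally show "(geom_fps d * (1 - fps_X ^ d)) $ i = (1 :: int fps) $ i" .
qed

function digit_prod :: "nat \<Rightarrow> nat \<Rightarrow> int" where
  "digit_prod p m =
     (if m = 0 \<or> p < 2 then 1 else alt_binom (p - 1) (m mod p) * digit_prod p (m div p))"
  by auto
termination by (relation "measure snd") auto

declare digit_prod.simps [simp del]

lemma digit_prod_0 [simp]: "digit_prod p 0 = 1"
  by (simp add: digit_prod.simps)

lemma digit_prod_rec:
  assumes "p \<ge> 2"
  shows "digit_prod p m = alt_binom (p - 1) (m mod p) * digit_prod p (m div p)"
  using assms by (cases "m = 0") (simp_all add: digit_prod.simps)

lemma digit_prod_add_mult:
  assumes "p \<ge> 2" and "r < p"
  shows "digit_prod p (r + p * q) = alt_binom (p - 1) r * digit_prod p q"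
  using assms digit_prod_rec[of p "r + p * q"] by simp

lemma digit_prod_add_power_mult:
  assumes p: "p \<ge> 2"
  shows "r < p ^ L \<Longrightarrow> digit_prod p (r + p ^ L * q) = digit_prod p r * digit_prod p q"
proof (induction L arbitrary: r)
  case (Suc L)
  have "r div p < p ^ L"
    using Suc.prems p by (simp add: div_less_iff_less_mult mult.commute)
  moreover have "r + p ^ Suc L * q = r mod p + p * (r div p + p ^ L * q)"
    by (simp add: algebra_simps)
  ultimately show ?case
    using p Suc.IH by (simp add: digit_prod_add_mult digit_prod_rec[of p r])
qed simp

lemma alt_binom_pred_prime_cong:
  assumes p: "prime p"
  shows "e < p \<Longrightarrow> int p dvd alt_binom (p - 1) e - 1"
proof (induction e)
  case (Suc e)
  have "int (Suc e) * (alt_binom (p - 1) (Suc e) - alt_binom (p - 1) e) = int p * - alt_binom (p - 1) e"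
    using alt_binom_Suc_diff[of e "p - 1"] Suc.prems by simp
  then have "int p dvd int (Suc e) * (alt_binom (p - 1) (Suc e) - alt_binom (p - 1) e)"
    by (rule dvdI)
  moreover have "\<not> int p dvd int (Suc e)"
    unfolding of_nat_dvd_iff using Suc.prems by (intro nat_dvd_not_less) simp_all
  ultimately have "int p dvd alt_binom (p - 1) (Suc e) - alt_binom (p - 1) e"
    using prime_dvd_mult_cancel[OF p, of "int (Suc e)" 1] by simp
  moreover have "int p dvd alt_binom (p - 1) e - 1"
    using Suc by simp
  ultimately show ?case
    by (rule dvd_diff_trans)
qed simp

lemma digit_prod_cong_1:
  assumes p: "prime p"
  shows "int p dvd digit_prod p m - 1"
proof (induction m rule: less_induct)
  case (less m)
  have p2: "p \<ge> 2" using p prime_ge_2_nat by blast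
  show ?case
  proof (cases "m = 0")
    case False
    then have "int p dvd digit_prod p (m div p) - 1"
      using p2 by (intro less) simp
    moreover have "int p dvd alt_binom (p - 1) (m mod p) - 1"
      using alt_binom_pred_prime_cong[OF p] p2 by simp
    ultimately have "int p dvd (alt_binom (p - 1) (m mod p) - 1) * digit_prod p (m div p)
        + (digit_prod p (m div p) - 1)"
      by (simp add: dvd_add dvd_mult2)
    also have "\<dots> = digit_prod p m - 1"
      using digit_prod_rec[OF p2, of m] by (simp add: algebra_simps)
    finally show ?thesis .
  qed simp
qed

lemma prime_not_dvd_digit_prod:
  assumes p: "prime p"
  shows "\<not> int p dvd digit_prod p m"
proof
  assume "int p dvd digit_prod p m"
  then have "int p dvd 1"
    using dvd_diff[of "int p" "digit_prod p m" "digit_prod p m - 1"] digit_prod_cong_1[OF p, of m]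
    by simp
  then show False
    using p by (simp add: prime_gt_1_nat)
qed

lemma less_power_Suc:
  fixes p n :: nat
  assumes "p \<ge> 2"
  shows "n < p ^ Suc n"
proof -
  have "n < 2 ^ n" by (rule less_exp)
  also have "(2::nat) ^ n \<le> p ^ n" using assms by (rule power_mono) simp
  also have "p ^ n \<le> p ^ Suc n" using assms by simp
  finally show ?thesis .
qed

definition one_minus_X_prod :: "nat \<Rightarrow> nat \<Rightarrow> int fps" where
  "one_minus_X_prod p L = (\<Prod>i<L. (1 - fps_X ^ (p ^ i)) ^ (p - 1))"

lemma one_minus_X_prod_nth:
  assumes p: "p \<ge> 2"
  shows "one_minus_X_prod p L $ m = (if m < p ^ L then digit_prod p m else 0)"
proof (induction L arbitrary: m)
  case 0
  then show ?case by (simp add: one_minus_X_prod_def)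
next
  case (Suc L)
  define D where "D = p ^ L"
  have D: "D > 0" using p by (simp add: D_def)
  have IH: "one_minus_X_prod p L $ i = (if i < D then digit_prod p i else 0)" for i
    using Suc.IH by (simp add: D_def)
  have m: "m = m mod D + D * (m div D)" by simp
  have "one_minus_X_prod p (Suc L) $ m = (one_minus_X_prod p L * (1 - fps_X ^ D) ^ (p - 1)) $ m"
    by (simp add: one_minus_X_prod_def D_def)
  also have "\<dots> = (\<Sum>i\<in>{m mod D}. one_minus_X_prod p L $ i * ((1 - fps_X ^ D) ^ (p - 1)) $ (m - i))"
  proof (rule fps_mult_nth_restrict)
    fix i assume "i \<le> m" "i \<notin> {m mod D}"
    moreover have "i = m mod D" if "i < D" and "D dvd m - i"
      using that \<open>i \<le> m\<close> mod_eq_dvd_iff_nat[of i m D] by simp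
    ultimately show "one_minus_X_prod p L $ i * ((1 - fps_X ^ D) ^ (p - 1)) $ (m - i) = 0"
      using D by (auto simp: IH one_minus_X_power_power_nth)
  qed simp
  also have "\<dots> = digit_prod p (m mod D) * alt_binom (p - 1) (m div D)"
    using D by (simp add: IH one_minus_X_power_power_nth minus_mod_eq_mult_div)
  also have "\<dots> = (if m < p ^ Suc L then digit_prod p m else 0)"
  proof (cases "m < p ^ Suc L")
    case True
    then have "m div D < p"
      using D by (simp add: div_less_iff_less_mult D_def mult.commute)
    then have "digit_prod p (m div D) = alt_binom (p - 1) (m div D)"
      using p digit_prod_add_mult[of p "m div D" 0] by simp
    then show ?thesis
      using True digit_prod_add_power_mult[OF p, of "m mod D" L "m div D"] D
      by (simp add: D_def flip: m)
  next
    case False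
    then have "p \<le> m div D"
      using D by (simp add: less_eq_div_iff_mult_less_eq D_def mult.commute)
    then have "p - 1 < m div D"
      using p by simp
    then show ?thesis
      using False by (simp add: alt_binom_def binomial_eq_0)
  qed
  finally show ?case .
qed

section \<open>Reduction modulo \<open>p\<^sup>2\<close>\<close>

lemma one_minus_X_prod_mult_cong_1:
  assumes p: "prime p" and n: "n < p ^ L"
  shows "fps_cong (int p) n (one_minus_X_prod p L * (1 - fps_X)) 1"
proof (rule fps_congI)
  fix i assume i: "i \<le> n"
  have p2: "p \<ge> 2" using p prime_ge_2_nat by blast
  have "one_minus_X_prod p L * (1 - fps_X) = one_minus_X_prod p L - fps_X * one_minus_X_prod p L"
    by (simp add: algebra_simps)
  then have "(one_minus_X_prod p L * (1 - fps_X)) $ i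
      = digit_prod p i - (if i = 0 then 0 else digit_prod p (i - 1))"
    using i n by (simp add: one_minus_X_prod_nth[OF p2] fps_X_mult_nth)
  then show "int p dvd (one_minus_X_prod p L * (1 - fps_X)) $ i - (1 :: int fps) $ i"
    using digit_prod_cong_1[OF p, of i] digit_prod_cong_1[OF p, of "i - 1"]
      dvd_diff[of "int p" "digit_prod p i - 1" "digit_prod p (i - 1) - 1"]
    by auto
qed

lemma one_minus_X_prod_mult_power_cong_1:
  assumes p: "prime p" and s: "s \<ge> 1"
  shows "fps_cong (int p ^ 2) n ((one_minus_X_prod p (Suc n) * (1 - fps_X)) ^ (u * p ^ s)) 1"
proof -
  have "p \<ge> 2" using p prime_ge_2_nat by blast
  then have "fps_cong (int p ^ 2) n ((one_minus_X_prod p (Suc n) * (1 - fps_X)) ^ p) (1 ^ p)"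
    by (intro fps_cong_power_prime p one_minus_X_prod_mult_cong_1 less_power_Suc)
  then have "fps_cong (int p ^ 2) n (((one_minus_X_prod p (Suc n) * (1 - fps_X)) ^ p) ^ (u * p ^ (s - 1)))
      ((1 ^ p) ^ (u * p ^ (s - 1)))"
    by (rule fps_cong_power)
  moreover have "u * p ^ s = p * (u * p ^ (s - 1))"
    using s by (cases s) auto
  ultimately show ?thesis
    by (simp only: power_mult power_one)
qed

lemma A_cong_one_minus_X_prod:
  assumes p: "prime p" "odd p" and u: "u \<ge> 1" and s: "s \<ge> 1"
  shows "int p ^ 2 dvd A p ((p - 1) * (u * p ^ s - 1)) n
           - (one_minus_X_prod p (Suc n) * (1 - fps_X ^ (p ^ (s - 1))) ^ (u * p)) $ n"
proof -
  have p2: "p \<ge> 2" using p prime_ge_2_nat by blast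
  define G where "G = (\<Prod>i\<le>n. geom_fps (p ^ i))"
  define Q where "Q = (\<Prod>i\<le>n. (1 - fps_X ^ (p ^ i) :: int fps))"
  define P where "P = one_minus_X_prod p (Suc n)"
  define m where "m = u * p ^ s - 1"
  have um: "u * p ^ s = m + 1" using u p2 by (simp add: m_def)
  have GQ: "G * Q = 1"
    unfolding G_def Q_def prod.distrib[symmetric] using p2
    by (intro prod.neutral ballI geom_fps_mult_one_minus_X_power) simp
  have P: "P = Q ^ (p - 1)"
    unfolding P_def one_minus_X_prod_def Q_def lessThan_Suc_atMost prod_power_distrib ..
  have A: "A p ((p - 1) * m) n = (G ^ ((p - 1) * m)) $ n"
    unfolding A_def G_def prod_power_distrib ..
  \<comment> \<open>Multiplying by \<open>(P * (1 - X)) ^ (u * p ^ s)\<close>, which is \<open>1\<close> modulo \<open>p\<^sup>2\<close>, turns the power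
    of \<open>G\<close> into a polynomial because \<open>G * Q = 1\<close>.\<close>
  have "fps_cong (int p ^ 2) n 1 ((P * (1 - fps_X)) ^ (u * p ^ s))"
    unfolding P_def using one_minus_X_prod_mult_power_cong_1[OF p(1) s] by (rule fps_cong_sym)
  then have "fps_cong (int p ^ 2) n (G ^ ((p - 1) * m) * 1) (G ^ ((p - 1) * m) * (P * (1 - fps_X)) ^ (u * p ^ s))"
    by (intro fps_cong_mult fps_cong_refl)
  also have "G ^ ((p - 1) * m) * (P * (1 - fps_X)) ^ (u * p ^ s)
      = (G * Q) ^ ((p - 1) * m) * P * (1 - fps_X) ^ (u * p ^ s)"
    unfolding um P by (simp add: power_mult_distrib power_add mult_ac flip: power_mult)
  also have "\<dots> = P * (1 - fps_X) ^ (u * p ^ s)"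
    by (simp add: GQ)
  finally have "fps_cong (int p ^ 2) n (G ^ ((p - 1) * m)) (P * (1 - fps_X) ^ (u * p ^ s))"
    by simp
  moreover have "of_nat p ^ 2 dvd ((1 - fps_X :: int fps) ^ p ^ s) ^ u - ((1 - fps_X ^ p ^ (s - 1)) ^ p) ^ u"
    by (rule dvd_power_diff, rule prime_square_dvd_one_minus_power_prime_power[OF p s])
  then have "fps_cong (int p ^ 2) n ((1 - fps_X) ^ (u * p ^ s)) ((1 - fps_X ^ p ^ (s - 1)) ^ (u * p))"
    unfolding mult.commute[of u] power_mult by (intro fps_cong_if_const_dvd) (simp flip: fps_of_nat)
  ultimately have "fps_cong (int p ^ 2) n (G ^ ((p - 1) * m)) (P * (1 - fps_X ^ p ^ (s - 1)) ^ (u * p))"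
    using fps_cong_trans fps_cong_mult[OF fps_cong_refl] by blast
  then have "int p ^ 2 dvd (G ^ ((p - 1) * m)) $ n - (P * (1 - fps_X ^ p ^ (s - 1)) ^ (u * p)) $ n"
    by (simp add: fps_cong_def)
  then show ?thesis
    using A unfolding P_def m_def by simp
qed

definition digit_prod_fps :: "nat \<Rightarrow> int fps" where
  "digit_prod_fps p = Abs_fps (digit_prod p)"

lemma one_minus_X_prod_mult_nth:
  assumes p: "p \<ge> 2" and n: "p ^ L * K \<le> n"
  shows "(one_minus_X_prod p (Suc n) * (1 - fps_X ^ p ^ L) ^ K) $ n
           = digit_prod p (n mod p ^ L) * ((1 - fps_X) ^ K * digit_prod_fps p) $ (n div p ^ L)"
proof -
  define D where "D = p ^ L"
  have D: "D > 0" using p by (simp add: D_def)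
  have K: "K \<le> n div D"
    using n D by (simp add: less_eq_div_iff_mult_less_eq mult.commute D_def)
  have digits: "one_minus_X_prod p (Suc n) $ (n - D * j) = digit_prod p (n mod D) * digit_prod p (n div D - j)"
    if "j \<le> K" for j
  proof -
    have "n = n mod D + D * (n div D)" by simp
    moreover have "D * (n div D - j) = D * (n div D) - D * j"
      by (simp add: diff_mult_distrib2)
    moreover have "D * j \<le> D * (n div D)"
      using that K by simp
    ultimately have "n - D * j = n mod D + D * (n div D - j)"
      by linarith
    then show ?thesis
      using less_power_Suc[OF p, of n] digit_prod_add_power_mult[OF p, of "n mod D" L "n div D - j"] D
      by (simp add: one_minus_X_prod_nth[OF p] D_def)
  qed
  have "(one_minus_X_prod p (Suc n) * (1 - fps_X ^ D) ^ K) $ n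
      = (\<Sum>j\<le>K. alt_binom K j * one_minus_X_prod p (Suc n) $ (n - D * j))"
    using one_minus_X_power_power_mult_nth[OF D, of K n] n by (simp add: mult.commute D_def)
  also have "\<dots> = (\<Sum>j\<le>K. alt_binom K j * (digit_prod p (n mod D) * digit_prod p (n div D - j)))"
    by (rule sum.cong) (simp_all add: digits)
  also have "\<dots> = digit_prod p (n mod D) * (\<Sum>j\<le>K. alt_binom K j * digit_prod_fps p $ (n div D - j))"
    by (simp add: sum_distrib_left digit_prod_fps_def mult_ac)
  also have "\<dots> = digit_prod p (n mod D) * ((1 - fps_X) ^ K * digit_prod_fps p) $ (n div D)"
    using one_minus_X_power_power_mult_nth[of 1 K "n div D"] K by simp
  finally show ?thesis by (simp add: D_def)
qed

definition fps_dilate :: "nat \<Rightarrow> 'a::zero fps \<Rightarrow> 'a fps" where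
  "fps_dilate d f = Abs_fps (\<lambda>i. if d dvd i then f $ (i div d) else 0)"

lemma digit_prod_fps_eq:
  assumes p: "p \<ge> 2"
  shows "digit_prod_fps p = (1 - fps_X) ^ (p - 1) * fps_dilate p (digit_prod_fps p)"
proof (rule fps_ext)
  fix m
  have "((1 - fps_X) ^ (p - 1) * fps_dilate p (digit_prod_fps p)) $ m
      = (\<Sum>i\<in>{m mod p}. ((1 - fps_X) ^ (p - 1)) $ i * fps_dilate p (digit_prod_fps p) $ (m - i))"
  proof (rule fps_mult_nth_restrict)
    fix i assume "i \<le> m" "i \<notin> {m mod p}"
    moreover have "i = m mod p" if "i < p" and "p dvd m - i"
      using that \<open>i \<le> m\<close> mod_eq_dvd_iff_nat[of i m p] by simp
    ultimately have "p - 1 < i \<or> \<not> p dvd m - i"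
      using p by force
    then show "((1 - fps_X) ^ (p - 1)) $ i * fps_dilate p (digit_prod_fps p) $ (m - i) = 0"
      using one_minus_X_power_power_nth[of 1 "p - 1" i]
      by (auto simp: fps_dilate_def alt_binom_def binomial_eq_0)
  qed simp
  also have "\<dots> = alt_binom (p - 1) (m mod p) * digit_prod p (m div p)"
    using p one_minus_X_power_power_nth[of 1 "p - 1" "m mod p"]
    by (simp add: fps_dilate_def digit_prod_fps_def minus_mod_eq_mult_div)
  also have "\<dots> = digit_prod_fps p $ m"
    using digit_prod_rec[OF p, of m] by (simp add: digit_prod_fps_def)
  finally show "digit_prod_fps p $ m = ((1 - fps_X) ^ (p - 1) * fps_dilate p (digit_prod_fps p)) $ m"
    by simp
qed

lemma one_minus_X_power_mult_dilate_nth: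
  assumes r: "r < p" and u: "u \<le> N"
  shows "((1 - fps_X) ^ (u * p + p - 1) * fps_dilate p F) $ (r + p * N)
           = (\<Sum>j\<le>u. alt_binom (u * p + p - 1) (r + p * j) * F $ (N - j))"
proof -
  define K where "K = u * p + p - 1"
  have p: "p > 0" using r by simp
  have coeff: "((1 - fps_X) ^ K :: int fps) $ i = alt_binom K i" for i
    using one_minus_X_power_power_nth[of 1 K i] by simp
  have "((1 - fps_X) ^ K * fps_dilate p F) $ (r + p * N)
      = (\<Sum>i\<in>(\<lambda>j. r + p * j) ` {..u}. ((1 - fps_X) ^ K) $ i * fps_dilate p F $ (r + p * N - i))"
  proof (rule fps_mult_nth_restrict)
    show "(\<lambda>j. r + p * j) ` {..u} \<subseteq> {..r + p * N}"
      using u by auto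
  next
    fix i assume i: "i \<le> r + p * N" "i \<notin> (\<lambda>j. r + p * j) ` {..u}"
    \<comment> \<open>A nonzero term has \<open>i \<le> K\<close> and \<open>i \<equiv> r (mod p)\<close>, so \<open>i = r + p j\<close> with \<open>j \<le> u\<close>.\<close>
    have "i \<notin> {i. i \<le> K \<and> p dvd r + p * N - i}"
    proof
      assume "i \<in> {i. i \<le> K \<and> p dvd r + p * N - i}"
      then obtain t where t: "r + p * N - i = p * t" and iK: "i \<le> K" by auto
      have "p * t < p * (N + 1)" using t i r by (simp add: algebra_simps)
      then have "t \<le> N" using mult_less_cancel1 by (metis Suc_eq_plus1 less_Suc_eq_le)
      then have i_eq: "i = r + p * (N - t)"
        using t i by (simp add: diff_mult_distrib2)
      then have "p * (N - t) < p * (u + 1)"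
        using iK r by (simp add: K_def algebra_simps)
      then have "N - t \<le> u" using mult_less_cancel1 by (metis Suc_eq_plus1 less_Suc_eq_le)
      then show False using i i_eq by auto
    qed
    then show "((1 - fps_X) ^ K) $ i * fps_dilate p F $ (r + p * N - i) = 0"
      by (auto simp: coeff fps_dilate_def alt_binom_def binomial_eq_0)
  qed
  also have "\<dots> = (\<Sum>j\<le>u. ((1 - fps_X) ^ K) $ (r + p * j) * fps_dilate p F $ (r + p * N - (r + p * j)))"
    using p by (subst sum.reindex) (auto simp: inj_on_def)
  also have "\<dots> = (\<Sum>j\<le>u. alt_binom K (r + p * j) * F $ (N - j))"
  proof (rule sum.cong)
    fix j
    have "r + p * N - (r + p * j) = p * (N - j)"
      by (simp add: diff_mult_distrib2)
    then show "((1 - fps_X) ^ K) $ (r + p * j) * fps_dilate p F $ (r + p * N - (r + p * j))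
        = alt_binom K (r + p * j) * F $ (N - j)"
      using p by (simp add: coeff fps_dilate_def)
  qed simp
  finally show ?thesis by (simp add: K_def)
qed

section \<open>Alternating digit sums\<close>

definition binom_digit_sum :: "nat \<Rightarrow> nat \<Rightarrow> nat \<Rightarrow> nat \<Rightarrow> int" where
  "binom_digit_sum p u N r = (\<Sum>j\<le>u. alt_binom (u * p + p - 1) (r + p * j) * digit_prod p (N - j))"

lemma one_minus_X_power_mult_digit_prod_fps_nth:
  assumes p: "p \<ge> 2" and r: "r < p" and u: "u \<le> N"
  shows "((1 - fps_X) ^ (u * p) * digit_prod_fps p) $ (r + p * N) = binom_digit_sum p u N r"
proof -
  have "(1 - fps_X :: int fps) ^ (u * p) * (1 - fps_X) ^ (p - 1) = (1 - fps_X) ^ (u * p + p - 1)"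
    using p by (simp flip: power_add)
  then have "(1 - fps_X) ^ (u * p) * digit_prod_fps p = (1 - fps_X) ^ (u * p + p - 1) * fps_dilate p (digit_prod_fps p)"
    by (subst digit_prod_fps_eq[OF p]) (simp add: mult.assoc [symmetric])
  then show ?thesis
    using one_minus_X_power_mult_dilate_nth[OF r u]
    by (simp add: binom_digit_sum_def digit_prod_fps_def)
qed

lemma alt_binom_Suc_add_mult_diff:
  assumes "p > 0"
  shows "int (Suc r) * (alt_binom (u * p + p - 1) (Suc r + p * j) - alt_binom (u * p + p - 1) (r + p * j))
    = int p * (int j * (alt_binom (u * p + p - 1) (r + p * j) - alt_binom (u * p + p - 1) (Suc r + p * j))
               - (int u + 1) * alt_binom (u * p + p - 1) (r + p * j))"
proof -
  have "int (Suc (u * p + p - 1)) = int p * (int u + 1)"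
    using assms by (simp add: algebra_simps)
  then show ?thesis
    using alt_binom_Suc_diff[of "r + p * j" "u * p + p - 1"] by (simp add: algebra_simps)
qed

lemma binom_digit_sum_Suc_eq:
  assumes "p > 0"
  shows "int (Suc r) * (binom_digit_sum p u N (Suc r) - binom_digit_sum p u N r)
    = int p * ((\<Sum>j\<le>u. int j * (alt_binom (u * p + p - 1) (r + p * j)
                                  - alt_binom (u * p + p - 1) (Suc r + p * j)) * digit_prod p (N - j))
               - (int u + 1) * binom_digit_sum p u N r)"
proof -
  define E where "E i = alt_binom (u * p + p - 1) i" for i
  define g where "g j = digit_prod p (N - j)" for j
  have summand: "int (Suc r) * (E (Suc r + p * j) * g j - E (r + p * j) * g j)
      = int p * (int j * (E (r + p * j) - E (Suc r + p * j)) * g j - (int u + 1) * (E (r + p * j) * g j))"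
    for j
    using arg_cong[OF alt_binom_Suc_add_mult_diff[OF assms, of r u j], of "\<lambda>x. x * g j"]
    by (simp add: E_def algebra_simps)
  have "int (Suc r) * (binom_digit_sum p u N (Suc r) - binom_digit_sum p u N r)
      = (\<Sum>j\<le>u. int (Suc r) * (E (Suc r + p * j) * g j - E (r + p * j) * g j))"
    by (simp add: binom_digit_sum_def E_def g_def sum_subtractf sum_distrib_left right_diff_distrib)
  also have "\<dots> = (\<Sum>j\<le>u. int p * (int j * (E (r + p * j) - E (Suc r + p * j)) * g j
      - (int u + 1) * (E (r + p * j) * g j)))"
    by (simp only: summand)
  finally show ?thesis
    by (simp add: binom_digit_sum_def E_def g_def sum_subtractf sum_distrib_left right_diff_distrib)
qed

lemma binom_digit_sum_Suc_cong:
  assumes p: "prime p" and r: "Suc r < p"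
  shows "int p dvd binom_digit_sum p u N (Suc r) - binom_digit_sum p u N r"
    and "int p dvd binom_digit_sum p u N r
           \<Longrightarrow> int p ^ 2 dvd binom_digit_sum p u N (Suc r) - binom_digit_sum p u N r"
proof -
  define E where "E i = alt_binom (u * p + p - 1) i" for i
  define W where "W = (\<Sum>j\<le>u. int j * (E (r + p * j) - E (Suc r + p * j)) * digit_prod p (N - j))"
  have p0: "p > 0" using r by simp
  have not_dvd: "\<not> int p dvd int (Suc r)"
    unfolding of_nat_dvd_iff using r by (intro nat_dvd_not_less) simp_all
  have "int p dvd E (Suc r + p * j) - E (r + p * j)" for j
    using alt_binom_Suc_add_mult_diff[OF p0, of r u j] prime_dvd_mult_cancel[OF p not_dvd, of 1]
    by (metis E_def dvd_triv_left power_one_right)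
  then have "int p dvd W"
    unfolding W_def by (intro dvd_sum) (simp add: dvd_diff_commute)
  have key: "int (Suc r) * (binom_digit_sum p u N (Suc r) - binom_digit_sum p u N r)
      = int p * (W - (int u + 1) * binom_digit_sum p u N r)"
    unfolding W_def E_def by (rule binom_digit_sum_Suc_eq[OF p0])
  then show "int p dvd binom_digit_sum p u N (Suc r) - binom_digit_sum p u N r"
    using prime_dvd_mult_cancel[OF p not_dvd, of 1] by (metis dvd_triv_left power_one_right)
  assume "int p dvd binom_digit_sum p u N r"
  with \<open>int p dvd W\<close> have "int p dvd W - (int u + 1) * binom_digit_sum p u N r"
    by simp
  then have "int p ^ 2 dvd int (Suc r) * (binom_digit_sum p u N (Suc r) - binom_digit_sum p u N r)"
    unfolding key power2_eq_square by (rule mult_dvd_mono[OF dvd_refl])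
  then show "int p ^ 2 dvd binom_digit_sum p u N (Suc r) - binom_digit_sum p u N r"
    using prime_dvd_mult_cancel[OF p not_dvd] by simp
qed

lemma binom_digit_sum_dvd_iff:
  assumes p: "prime p"
  shows "r < p \<Longrightarrow> int p dvd binom_digit_sum p u N r \<longleftrightarrow> int p dvd binom_digit_sum p u N 0"
proof (induction r)
  case (Suc r)
  then show ?case
    using dvd_diff_imp_dvd_iff[OF binom_digit_sum_Suc_cong(1)[OF p Suc.prems, of u N]] by simp
qed simp

lemma binom_digit_sum_cong_0:
  assumes p: "prime p" and dvd_0: "int p dvd binom_digit_sum p u N 0"
  shows "r < p \<Longrightarrow> int p ^ 2 dvd binom_digit_sum p u N r - binom_digit_sum p u N 0"
proof (induction r)
  case (Suc r)
  have "int p dvd binom_digit_sum p u N r"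
    using binom_digit_sum_dvd_iff[OF p, of r] Suc.prems dvd_0 by simp
  then have "int p ^ 2 dvd binom_digit_sum p u N (Suc r) - binom_digit_sum p u N r"
    by (rule binom_digit_sum_Suc_cong(2)[OF p Suc.prems])
  moreover have "int p ^ 2 dvd binom_digit_sum p u N r - binom_digit_sum p u N 0"
    using Suc by simp
  ultimately show ?case
    by (rule dvd_diff_trans)
qed simp

section \<open>The first nonzero digit\<close>

function first_nonzero_digit :: "nat \<Rightarrow> nat \<Rightarrow> nat" where
  "first_nonzero_digit p M =
     (if M = 0 \<or> p < 2 then 0
      else if M mod p \<noteq> 0 then M mod p else first_nonzero_digit p (M div p))"
  by auto
termination by (relation "measure snd") auto

declare first_nonzero_digit.simps [simp del]

lemma first_nonzero_digit_rec:
  assumes "p \<ge> 2" and "M > 0"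
  shows "first_nonzero_digit p M
           = (if M mod p \<noteq> 0 then M mod p else first_nonzero_digit p (M div p))"
  using assms by (subst first_nonzero_digit.simps) simp

lemma first_nonzero_digit_bounds:
  assumes p: "p \<ge> 2"
  shows "M > 0 \<Longrightarrow> 0 < first_nonzero_digit p M \<and> first_nonzero_digit p M < p"
proof (induction M rule: less_induct)
  case (less M)
  show ?case
  proof (cases "M mod p = 0")
    case True
    then have "M div p > 0" "M div p < M"
      using less.prems p by (auto elim!: dvdE)
    then show ?thesis
      using less.IH[of "M div p"] first_nonzero_digit_rec[OF p less.prems] True by simp
  qed (use first_nonzero_digit_rec[OF p less.prems] p in simp)
qed

lemma digit_Least_eq_first_nonzero_digit:
  assumes p: "p \<ge> 2"
  shows "n div p ^ k = M \<Longrightarrow> M > 0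
           \<Longrightarrow> digit p n (LEAST t. k \<le> t \<and> digit p n t \<noteq> 0) = first_nonzero_digit p M"
proof (induction M arbitrary: k rule: less_induct)
  case (less M)
  have digit_k: "digit p n k = M mod p"
    using less.prems by (simp add: digit_def)
  show ?case
  proof (cases "M mod p = 0")
    case False
    then have "(LEAST t. k \<le> t \<and> digit p n t \<noteq> 0) = k"
      using digit_k by (intro Least_equality) auto
    then show ?thesis
      using first_nonzero_digit_rec[OF p less.prems(2)] False digit_k by simp
  next
    case True
    have "n div p ^ Suc k = M div p"
      by (simp only: power_Suc2 div_mult2_eq less.prems(1))
    moreover have "M div p > 0" "M div p < M"
      using True less.prems p by (auto elim!: dvdE)
    moreover have "(\<lambda>t. k \<le> t \<and> digit p n t \<noteq> 0) = (\<lambda>t. Suc k \<le> t \<and> digit p n t \<noteq> 0)"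
      using True digit_k by (auto simp: le_less Suc_le_eq)
    ultimately show ?thesis
      using less.IH[of "M div p" "Suc k"] first_nonzero_digit_rec[OF p less.prems(2)] True by simp
  qed
qed

lemma digit_tidx:
  assumes p: "p \<ge> 2" and n: "n \<ge> p ^ (s + 1)"
  shows "digit p n (tidx p s n) = first_nonzero_digit p (n div p ^ (s + 1))"
proof -
  have "tidx p s n = (LEAST t. Suc s \<le> t \<and> digit p n t \<noteq> 0)"
    unfolding tidx_def by (simp add: Suc_le_eq)
  moreover have "n div p ^ (s + 1) > 0"
    using n p by (simp add: div_greater_zero_iff)
  ultimately show ?thesis
    using digit_Least_eq_first_nonzero_digit[OF p] by simp
qed

lemma digit_prod_pred:
  assumes p: "p \<ge> 2" "odd p"
  shows "M > 0 \<Longrightarrow> int (p - first_nonzero_digit p M) * digit_prod p (M - 1)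
                      = - int (first_nonzero_digit p M) * digit_prod p M"
proof (induction M rule: less_induct)
  case (less M)
  define q where "q = M div p"
  define e where "e = M mod p"
  have M: "M = e + p * q" by (simp add: e_def q_def)
  have ep: "e < p" using p by (simp add: e_def)
  show ?case
  proof (cases "e = 0")
    case False
    then have "first_nonzero_digit p M = e"
      using first_nonzero_digit_rec[OF p(1) less.prems] by (simp add: e_def)
    moreover have "M - 1 = (e - 1) + p * q"
      using M False by simp
    then have "digit_prod p (M - 1) = alt_binom (p - 1) (e - 1) * digit_prod p q"
      using p(1) ep by (simp add: digit_prod_add_mult)
    moreover have "digit_prod p M = alt_binom (p - 1) e * digit_prod p q"
      using p(1) ep M by (simp add: digit_prod_add_mult)
    ultimately show ?thesis
      using alt_binom_pred[of e p] False ep by (simp flip: mult.assoc)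
  next
    case True
    \<comment> \<open>\<open>M - 1\<close> ends in the digit \<open>p - 1\<close>, whose factor \<open>alt_binom (p - 1) (p - 1) = 1\<close> for odd \<open>p\<close>.\<close>
    then have q: "q > 0" "q < M" and Mq: "M = 0 + p * q"
      using M less.prems p by auto
    have "first_nonzero_digit p M = first_nonzero_digit p q"
      using first_nonzero_digit_rec[OF p(1) less.prems] True by (simp add: e_def q_def)
    moreover have "M - 1 = (p - 1) + p * (q - 1)"
      using Mq q p by (simp add: algebra_simps)
    then have "digit_prod p (M - 1) = alt_binom (p - 1) (p - 1) * digit_prod p (q - 1)"
      using p by (simp only:) (rule digit_prod_add_mult, simp_all)
    then have "digit_prod p (M - 1) = digit_prod p (q - 1)"
      using p by (simp add: alt_binom_def)
    moreover have "digit_prod p M = digit_prod p q"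
      using p by (subst Mq, subst digit_prod_add_mult) simp_all
    ultimately show ?thesis
      using less.IH[OF q(2) q(1)] by simp
  qed
qed

definition digit_criterion :: "nat \<Rightarrow> nat \<Rightarrow> nat \<Rightarrow> nat \<Rightarrow> int" where
  "digit_criterion p u \<delta> e = (\<Sum>j\<le>u. alt_binom (u * p + p - 1) (p * j) *
     (if j \<le> \<delta> then int (p - e) * alt_binom (p - 1) (\<delta> - j)
      else - int e * alt_binom (p - 1) (p + \<delta> - j)))"

lemma binom_digit_sum_0_eq:
  assumes p: "p \<ge> 2" "odd p" and u: "u < p" and \<delta>: "\<delta> < p" and M: "M > 0"
  shows "int (p - first_nonzero_digit p M) * binom_digit_sum p u (\<delta> + p * M) 0
           = digit_prod p M * digit_criterion p u \<delta> (first_nonzero_digit p M)"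
proof -
  define e where "e = first_nonzero_digit p M"
  \<comment> \<open>Subtracting \<open>j \<le> u < p\<close> from \<open>\<delta> + p M\<close> borrows from \<open>M\<close> exactly when \<open>j > \<delta>\<close>.\<close>
  have "int (p - e) * digit_prod p (\<delta> + p * M - j)
      = digit_prod p M * (if j \<le> \<delta> then int (p - e) * alt_binom (p - 1) (\<delta> - j)
                          else - int e * alt_binom (p - 1) (p + \<delta> - j))"
    if j: "j \<le> u" for j
  proof (cases "j \<le> \<delta>")
    case True
    then have "\<delta> + p * M - j = (\<delta> - j) + p * M" by simp
    then have "digit_prod p (\<delta> + p * M - j) = alt_binom (p - 1) (\<delta> - j) * digit_prod p M"
      using \<delta> p by (simp add: digit_prod_add_mult)
    then show ?thesis
      using True by simp
  next
    case False
    then have "\<delta> + p * M - j = (p + \<delta> - j) + p * (M - 1)"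
      using M j u by (cases M) (auto simp: algebra_simps)
    then have "digit_prod p (\<delta> + p * M - j) = alt_binom (p - 1) (p + \<delta> - j) * digit_prod p (M - 1)"
      using False p by (simp only:) (rule digit_prod_add_mult, simp_all)
    then have "int (p - e) * digit_prod p (\<delta> + p * M - j)
        = alt_binom (p - 1) (p + \<delta> - j) * (int (p - e) * digit_prod p (M - 1))"
      by (simp add: algebra_simps)
    also have "int (p - e) * digit_prod p (M - 1) = - int e * digit_prod p M"
      unfolding e_def using digit_prod_pred[OF p M] .
    finally show ?thesis
      using False by (simp add: algebra_simps)
  qed
  then show ?thesis
    unfolding binom_digit_sum_def digit_criterion_def e_def[symmetric] sum_distrib_left
    by (intro sum.cong) (simp_all add: mult.left_commute)
qed

section \<open>Divisibility of \<open>A\<close> by \<open>p\<^sup>2\<close>\<close>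

lemma A_cong_binom_digit_sum:
  assumes p: "prime p" "odd p" and u: "1 \<le> u" "u \<le> p - 1" and s: "s \<ge> 1"
    and n: "n \<ge> p ^ (s + 1)"
  shows "int p ^ 2 dvd A p ((p - 1) * (u * p ^ s - 1)) n
           - digit_prod p (n mod p ^ (s - 1))
             * binom_digit_sum p u (n div p ^ s) (n div p ^ (s - 1) mod p)"
proof -
  have p2: "p \<ge> 2" using p prime_ge_2_nat by blast
  have ps: "p ^ s = p ^ (s - 1) * p"
    using s by (cases s) simp_all
  have "p ^ (s - 1) * (u * p) = u * p ^ s"
    by (simp add: ps)
  also have "\<dots> \<le> p ^ (s + 1)"
    using u p2 by simp
  also have "\<dots> \<le> n"
    by (rule n)
  finally have "(one_minus_X_prod p (Suc n) * (1 - fps_X ^ p ^ (s - 1)) ^ (u * p)) $ n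
      = digit_prod p (n mod p ^ (s - 1)) * ((1 - fps_X) ^ (u * p) * digit_prod_fps p) $ (n div p ^ (s - 1))"
    by (intro one_minus_X_prod_mult_nth p2)
  also have "n div p ^ (s - 1) = n div p ^ (s - 1) mod p + p * (n div p ^ s)"
    by (simp add: ps div_mult2_eq)
  also have "((1 - fps_X) ^ (u * p) * digit_prod_fps p) $ \<dots>
      = binom_digit_sum p u (n div p ^ s) (n div p ^ (s - 1) mod p)"
  proof (rule one_minus_X_power_mult_digit_prod_fps_nth[OF p2])
    have "p * p ^ s \<le> n" using n by simp
    then have "p \<le> n div p ^ s"
      using p2 by (simp add: less_eq_div_iff_mult_less_eq)
    then show "u \<le> n div p ^ s" using u by simp
  qed (use p2 in simp)
  finally show ?thesis
    using A_cong_one_minus_X_prod[OF p u(1) s, of n] by simp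
qed

lemma prime_square_dvd_A_iff_binom_digit_sum_0:
  assumes p: "prime p" "odd p" and u: "1 \<le> u" "u \<le> p - 1" and s: "s \<ge> 1"
    and n: "n \<ge> p ^ (s + 1)" and dvd_A: "int p dvd A p ((p - 1) * (u * p ^ s - 1)) n"
  shows "int p ^ 2 dvd A p ((p - 1) * (u * p ^ s - 1)) n
           \<longleftrightarrow> int p ^ 2 dvd binom_digit_sum p u (n div p ^ s) 0"
proof -
  have p2: "p \<ge> 2" using p prime_ge_2_nat by blast
  define a where "a = A p ((p - 1) * (u * p ^ s - 1)) n"
  define c where "c = digit_prod p (n mod p ^ (s - 1))"
  define S where "S r = binom_digit_sum p u (n div p ^ s) r" for r
  define r where "r = n div p ^ (s - 1) mod p"
  have r: "r < p"
    using p2 by (simp add: r_def)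
  have c: "\<not> int p dvd c"
    unfolding c_def by (simp add: prime_not_dvd_digit_prod p)
  have cong: "int p ^ 2 dvd a - c * S r"
    unfolding a_def c_def S_def r_def by (rule A_cong_binom_digit_sum[OF p u s n])
  have "int p dvd int p ^ 2"
    by simp
  then have "int p dvd a - c * S r"
    using cong by (rule dvd_trans)
  then have "int p dvd c * S r"
    using dvd_A dvd_diff_imp_dvd_iff unfolding a_def by blast
  then have "int p dvd S r"
    using prime_dvd_mult_cancel[OF p(1) c, of 1] by simp
  then have "int p dvd S 0"
    using binom_digit_sum_dvd_iff[OF p(1) r] by (simp add: S_def)
  then have cong_0: "int p ^ 2 dvd S r - S 0"
    unfolding S_def by (rule binom_digit_sum_cong_0[OF p(1) _ r])
  have "int p ^ 2 dvd a \<longleftrightarrow> int p ^ 2 dvd c * S r"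
    using cong by (rule dvd_diff_imp_dvd_iff)
  also have "\<dots> \<longleftrightarrow> int p ^ 2 dvd S r"
    by (rule prime_dvd_mult_cancel[OF p(1) c])
  also have "\<dots> \<longleftrightarrow> int p ^ 2 dvd S 0"
    using cong_0 by (rule dvd_diff_imp_dvd_iff)
  finally show ?thesis
    by (simp add: a_def S_def)
qed

lemma prime_square_dvd_binom_digit_sum_0_iff:
  assumes p: "prime p" "odd p" and u: "u < p" and n: "n \<ge> p ^ (s + 1)"
  shows "int p ^ 2 dvd binom_digit_sum p u (n div p ^ s) 0
           \<longleftrightarrow> int p ^ 2 dvd digit_criterion p u (digit p n s) (digit p n (tidx p s n))"
proof -
  have p2: "p \<ge> 2" using p prime_ge_2_nat by blast
  define M where "M = n div p ^ (s + 1)"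
  define e where "e = first_nonzero_digit p M"
  have \<delta>: "digit p n s < p"
    using p2 by (simp add: digit_def)
  have M: "M > 0"
    using n p2 by (simp add: M_def div_greater_zero_iff)
  have "0 < e" "e < p"
    unfolding e_def using first_nonzero_digit_bounds[OF p2 M] by auto
  then have pe: "\<not> int p dvd int (p - e)"
    unfolding of_nat_dvd_iff by (intro nat_dvd_not_less) simp_all
  have cM: "\<not> int p dvd digit_prod p M"
    by (simp add: prime_not_dvd_digit_prod p)
  have "p ^ (s + 1) = p ^ s * p"
    by simp
  then have "M = n div p ^ s div p"
    by (simp only: M_def div_mult2_eq)
  then have "n div p ^ s = digit p n s + p * M"
    by (simp add: digit_def)
  then have criterion: "int (p - e) * binom_digit_sum p u (n div p ^ s) 0
      = digit_prod p M * digit_criterion p u (digit p n s) e"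
    using binom_digit_sum_0_eq[OF p2 p(2) u \<delta> M] by (simp add: e_def)
  have "int p ^ 2 dvd binom_digit_sum p u (n div p ^ s) 0
      \<longleftrightarrow> int p ^ 2 dvd int (p - e) * binom_digit_sum p u (n div p ^ s) 0"
    by (rule prime_dvd_mult_cancel[OF p(1) pe, symmetric])
  also have "\<dots> \<longleftrightarrow> int p ^ 2 dvd digit_criterion p u (digit p n s) e"
    unfolding criterion by (rule prime_dvd_mult_cancel[OF p(1) cM])
  finally show ?thesis
    using digit_tidx[OF p2 n] by (simp add: e_def M_def)
qed

lemma prime_square_dvd_A_iff:
  assumes p: "prime p" "odd p" and u: "1 \<le> u" "u \<le> p - 1" and s: "s \<ge> 1"
    and n: "n \<ge> p ^ (s + 1)" and dvd_A: "int p dvd A p ((p - 1) * (u * p ^ s - 1)) n"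
  shows "int p ^ 2 dvd A p ((p - 1) * (u * p ^ s - 1)) n
           \<longleftrightarrow> int p ^ 2 dvd digit_criterion p u (digit p n s) (digit p n (tidx p s n))"
proof -
  have "u < p" using u p(1) prime_gt_0_nat by fastforce
  then show ?thesis
    using prime_square_dvd_A_iff_binom_digit_sum_0[OF assms]
      prime_square_dvd_binom_digit_sum_0_iff[OF p _ n]
    by simp
qed

lemma multiplicity_eq_2_iff:
  assumes "multiplicity q a \<in> {1, 2}" and "\<not> is_unit q"
  shows "multiplicity q a = 2 \<longleftrightarrow> q ^ 2 dvd a"
proof
  assume "q ^ 2 dvd a"
  moreover have "a \<noteq> 0" using assms(1) by auto
  ultimately have "multiplicity q a \<ge> 2"
    using assms(2) by (intro multiplicity_geI)
  then show "multiplicity q a = 2" using assms(1) by auto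
qed (auto intro: multiplicity_dvd')

theorem theorem3p1:
  fixes p u s n n' :: nat
  assumes "prime p" and "p \<ge> 3"
    and "1 \<le> u" and "u \<le> p - 1"
    and "s \<ge> 2"
    and "n \<ge> p ^ (s + 1)" and "n' \<ge> p ^ (s + 1)"
    and "multiplicity (int p) (A p ((p - 1) * (u * p ^ s - 1)) n) \<in> {1, 2}"
    and "multiplicity (int p) (A p ((p - 1) * (u * p ^ s - 1)) n') \<in> {1, 2}"
    and "digit p n s = digit p n' s"
    and "digit p n (tidx p s n) = digit p n' (tidx p s n')"
  shows "multiplicity (int p) (A p ((p - 1) * (u * p ^ s - 1)) n)
       = multiplicity (int p) (A p ((p - 1) * (u * p ^ s - 1)) n')"
proof -
  \<comment> \<open>The argument only needs \<open>s \<ge> 1\<close>.\<close>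
  define k where "k = (p - 1) * (u * p ^ s - 1)"
  have p: "prime p" "odd p" and s: "s \<ge> 1" and not_unit: "\<not> is_unit (int p)"
    using assms(1,2,5) prime_odd_nat[of p] by auto
  have val_2_iff: "multiplicity (int p) (A p k m) = 2
      \<longleftrightarrow> int p ^ 2 dvd digit_criterion p u (digit p m s) (digit p m (tidx p s m))"
    if m: "m \<ge> p ^ (s + 1)" and val: "multiplicity (int p) (A p k m) \<in> {1, 2}" for m
  proof -
    have "int p ^ 1 dvd A p k m"
      using val by (intro multiplicity_dvd') auto
    then have "int p dvd A p k m"
      by simp
    then show ?thesis
      unfolding multiplicity_eq_2_iff[OF val not_unit]
      using prime_square_dvd_A_iff[OF p assms(3,4) s m] by (simp add: k_def)
  qed
  have val: "multiplicity (int p) (A p k n) \<in> {1, 2}" "multiplicity (int p) (A p k n') \<in> {1, 2}"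
    using assms(8,9) by (simp_all add: k_def)
  then have "multiplicity (int p) (A p k n) = 2 \<longleftrightarrow> multiplicity (int p) (A p k n') = 2"
    using val_2_iff[OF assms(6) val(1)] val_2_iff[OF assms(7) val(2)] assms(10,11) by simp
  then show ?thesis
    using val unfolding k_def by auto
qed

end
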